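(* Consider the fair-encoder optimization problem $$\sup_{\bm f_{Enc} \in \mathcal A_r} \Big\{(1-\lambda)\,\mathrm{Dep}\left(\bm f_{Enc}(\tilde{X};\bm{\Theta}_{Enc}), Y\right) -\lambda\, \mathrm{Dep}\left(\bm f_{Enc}(\tilde{X}_c;\bm{\Theta}_{Enc}), S_c\right)\Big\},\quad 0\le\lambda<1,$$ where the first and second terms are estimated empirically as $\frac{1}{n^2}\left\|\bm \Theta_{Enc} \bm K_{\tilde{X}} \bm H \bm L_{Y} \right\|^2_F$ and $\frac{1}{n^2}\left\|\bm \Theta_{Enc} \bm K_{\tilde{X}_c} \bm H \bm L_{S_c} \right\|^2_F$, respectively. A global optimizer of this problem is $$\bm f^{\text{opt}}_{\mathcal H_{\tilde{X}}}(\tilde{X}; \bm \Theta_{Enc}) = \bm \Theta^{\text{opt}}_{Enc} \left[k_{\tilde{X}}(\tilde{\bm{x}}_1, {\tilde{X}}),\cdots, k_{\tilde{X}}(\tilde{\bm{x}}_n, {\tilde{X}})\right]^T$$ where $\bm \Theta^{\text{opt}}_{Enc}=\bm U^T \bm L_{\tilde{X}}^\dagger\in \mathbb R^{r\times n}$ and the columns of $\bm U$ are eigenvectors corresponding to the $r$ largest eigenvalues of the generalized eigenvalue problem $$\left((1-\lambda) \bm L^T_{\tilde{X}} \bm H\bm K_Y\bm H \bm L_{\tilde{X}} -\lambda \bm L^T_{{\tilde{X}}_c} \bm H\bm K_{S_c}\bm H \bm L_{{\tilde{X}}_c} \right)\bm u = \lambda \left(\frac{1}{n}\,\bm L^T_{\tilde{X}}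 \bm H \bm L_{\tilde{X}} + \gamma \bm I\right) \bm u.$$ Here $\bm L_{\tilde{X}}\bm L_{\tilde{X}}^T=\bm K_{\tilde{X}}$, ${\tilde{X}}_c \sim p(\tilde{X}|Y=y)$ and $S_c \sim p(S|Y=y)$.
   Context: Setting: data $X$, target label $Y$, sensitive attribute $S$; $\tilde{X}=f(X;\bm{\Theta}_{FE})$ are features from a (frozen) feature extractor, with $n$ samples $\tilde{\bm x}_1,\dots,\tilde{\bm x}_n$. The fair encoder $\bm f_{Enc}=(f_1,\dots,f_r)$ has components in a universal RKHS $\mathcal H_{\tilde X}$ with kernel $k_{\tilde X}$ and Gram matrix $\bm K_{\tilde X}$, parametrized as $\bm f(\tilde X)=\bm\Theta_{Enc}[k_{\tilde X}(\tilde{\bm x}_1,\tilde X),\dots,k_{\tilde X}(\tilde{\bm x}_n,\tilde X)]^T$. The constraint set is $\mathcal A_r:=\{(f_1,\cdots, f_r) \mid f_i, f_j\in \mathcal H_{\tilde{X}},\, \mathrm{Cov} (f_i({\tilde{X}}), f_j({\tilde{X}}) )+\gamma\, \langle f_i, f_j\rangle_{\mathcal H_{\tilde{X}}}=\delta_{i,j}\}$ with $\gamma>0$. $\bm H = \bm I_n-\frac{1}{n} \bm 1_n \bm 1_n^T$ is the centering matrix; $\bm K_Y$, $\bm K_{S_c}$ are Gram matrices of (universal) kernels on $Y$ and on $S$ conditioned on $Y=y$, and $\bm L_Y$, $\bm L_{S_c}$ are full column-rank matrices with $\bm L_Y\bm L_Y^T=\bm K_Y$, $\bm L_{S_c}\bm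 L_{S_c}^T=\bm K_{S_c}$ (Cholesky factorization). $\dagger$ denotes the pseudo-inverse. The conditional dependence measure is $\mathrm{Dep}(\bm f(X), S|Y=y) := \sum_{j=1}^r \sum_{\beta_S \in \mathcal U_S } \mathbb{E}[(f_j(X_c)-\mathbb{E}f_j(X_c))(\beta_S(S_c)-\mathbb{E}\beta_S(S_c))]$ with $\mathcal U_S$ a countable orthonormal basis of a separable universal RKHS on $S$. *)

theory Defs
  imports "HOL-Analysis.Analysis"
begin

definition centering :: "real^'n^'n" where
  "centering = mat 1 - (\<chi> i j. 1 / real CARD('n))"

definition frob_sq :: "real^'b^'a \<Rightarrow> real" where
  "frob_sq A = (\<Sum>i\<in>UNIV. \<Sum>j\<in>UNIV. (A$i$j)^2)"

definition gram :: "('x \<Rightarrow> 'x \<Rightarrow> real) \<Rightarrow> ('n \<Rightarrow> 'x) \<Rightarrow> ('m \<Rightarrow> 'x) \<Rightarrow> real^'m^'n" where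
  "gram k xs zs = (\<chi> i j. k (xs i) (zs j))"

definition pinv :: "real^'b^'a \<Rightarrow> real^'a^'b" where
  "pinv A = (THE X. A ** X ** A = A \<and> X ** A ** X = X \<and>
                    transpose (A ** X) = A ** X \<and> transpose (X ** A) = X ** A)"

text \<open>Empirical covariance matrix of r functions, given the r x n matrix F of their
  values on the n samples: (1/n) F H F^T.\<close>
definition emp_cov :: "real^'n^'r \<Rightarrow> real^'r^'r" where
  "emp_cov F = (1 / real CARD('n)) *\<^sub>R (F ** centering ** transpose F)"

text \<open>Empirical version of the constraint set A_r for the encoder
  f(x) = Theta [k(x_1,x),...,k(x_n,x)]^T:  the values on the samples are Theta K,
  and <f_i,f_j>_H = (Theta K Theta^T)_{ij}.\<close>
definition fair_feasible :: "real \<Rightarrow> real^'n^'n \<Rightarrow> real^'n^'r \<Rightarrow> bool" where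
  "fair_feasible gam K Theta \<longleftrightarrow>
     emp_cov (Theta ** K) + gam *\<^sub>R (Theta ** K ** transpose Theta) = mat 1"

definition fair_objective ::
  "real \<Rightarrow> real^'n^'n \<Rightarrow> real^'m^'n \<Rightarrow> real^'p^'n \<Rightarrow> real^'q^'m \<Rightarrow> real^'n^'r \<Rightarrow> real" where
  "fair_objective lam K Kc LY LS Theta =
     (1 - lam) / (real CARD('n))^2 * frob_sq (Theta ** K ** centering ** LY)
     - lam / (real CARD('n))^2 * frob_sq (Theta ** Kc ** centering ** LS)"

definition fair_optimizer ::
  "real \<Rightarrow> real \<Rightarrow> real^'n^'n \<Rightarrow> real^'m^'n \<Rightarrow> real^'p^'n \<Rightarrow> real^'q^'m \<Rightarrow> real^'n^'r \<Rightarrow> bool" where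
  "fair_optimizer lam gam K Kc LY LS Theta \<longleftrightarrow>
     fair_feasible gam K Theta \<and>
     (\<forall>Theta' :: real^'n^'r. fair_feasible gam K Theta' \<longrightarrow>
        fair_objective lam K Kc LY LS Theta' \<le> fair_objective lam K Kc LY LS Theta)"

text \<open>The columns of U are (B-normalized, mutually B-orthogonal) eigenvectors of the
  generalized eigenproblem A u = tau B u, belonging to the r largest generalized
  eigenvalues (counted with multiplicity): every generalized eigenvector that is
  B-orthogonal to all columns of U has eigenvalue at most each tau_i.\<close>
definition top_gen_eigvecs :: "real^'d^'d \<Rightarrow> real^'d^'d \<Rightarrow> real^'r^'d \<Rightarrow> bool" where
  "top_gen_eigvecs A B U \<longleftrightarrow>
     (\<exists>tau :: 'r \<Rightarrow> real.
        (\<forall>i. A *v column i U = tau i *\<^sub>R (B *v column i U)) \<and>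
        transpose U ** B ** U = mat 1 \<and>
        (\<forall>w mu. w \<noteq> 0 \<and> A *v w = mu *\<^sub>R (B *v w) \<and> transpose U *v (B *v w) = 0
                 \<longrightarrow> (\<forall>i. mu \<le> tau i)))"

end

theory Submission
  imports Defs
begin

text \<open>
  With K = L L^T and W = Theta L, both the constraint and the objective depend on the encoder
  only through W: feasibility reads W B W^T = I and the objective is tr (W A W^T) / n^2, where
  A and B are the two matrices of the generalized eigenproblem. Full column rank of L makes
  Theta_opt L = U^T, so the claim is the Ky Fan maximum principle for the symmetric-definite
  pencil (A, B): tr (V^T A V) \<le> tr (U^T A U) whenever V^T B V = I. To see it, split each column
  of V into its B-projection onto the span of U and a remainder in the B-orthogonal complement
  of U. On that complement the Rayleigh quotient is at most min tau, because a maximizer is a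
  generalized eigenvector and the top-eigenvalue hypothesis applies to it; Bessel's inequality
  then bounds the total weight that the columns of V put on each eigenvector by 1.
\<close>

lemma transpose_add: "transpose (A + B) = transpose A + transpose (B :: 'a::plus^'n^'m)"
  by (simp add: transpose_def vec_eq_iff)

lemma transpose_diff: "transpose (A - B) = transpose A - transpose (B :: 'a::minus^'n^'m)"
  by (simp add: transpose_def vec_eq_iff)

lemma matrix_add_rdistrib: "(A + B) ** C = A ** C + B ** (C :: 'a::semiring_1^'p^'n)"
  by (simp add: matrix_matrix_mult_def vec_eq_iff sum.distrib distrib_right)

lemma matrix_diff_rdistrib: "(A - B) ** C = A ** C - B ** (C :: 'a::ring_1^'p^'n)"
  by (simp add: matrix_matrix_mult_def vec_eq_iff sum_subtractf left_diff_distrib)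

lemma matrix_diff_ldistrib: "A ** (B - C) = A ** B - A ** (C :: 'a::ring_1^'p^'n)"
  by (simp add: matrix_matrix_mult_def vec_eq_iff sum_subtractf right_diff_distrib)

lemma trace_scaleR: "trace (c *\<^sub>R A) = c * trace (A :: real^'n^'n)"
  by (simp add: trace_def sum_distrib_left)

lemma inner_matrix_vector_transpose: "x \<bullet> (A *v y) = (transpose A *v x) \<bullet> (y :: real^'n)"
  by (simp add: dot_lmul_matrix)

lemma inner_symmetric_matrix:
  assumes "transpose A = A"
  shows "x \<bullet> (A *v y) = y \<bullet> (A *v (x :: real^'n))"
  by (metis assms inner_commute inner_matrix_vector_transpose)

lemma inner_matrix_vector_scaleR:
  "(c *\<^sub>R x) \<bullet> (A *v (c *\<^sub>R x)) = c\<^sup>2 * (x \<bullet> (A *v (x :: real^'n)))"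
  by (simp add: matrix_vector_mult_scaleR power2_eq_square)

lemma inner_symmetric_matrix_add:
  assumes "transpose A = A"
  shows "(x + y) \<bullet> (A *v (x + y)) = x \<bullet> (A *v x) + 2 * (x \<bullet> (A *v y)) + y \<bullet> (A *v (y :: real^'n))"
  using inner_symmetric_matrix[OF assms, of y x]
  by (simp add: matrix_vector_right_distrib inner_add_left inner_add_right)

lemma congruence_psd:
  assumes "\<And>x. 0 \<le> x \<bullet> (A *v x)"
  shows "0 \<le> w \<bullet> ((transpose L ** A ** L) *v (w :: real^'m))"
proof -
  have "w \<bullet> ((transpose L ** A ** L) *v w) = w \<bullet> (transpose L *v (A *v (L *v w)))"
    by (simp only: matrix_vector_mul_assoc matrix_mul_assoc)
  also have "\<dots> = (L *v w) \<bullet> (A *v (L *v w))"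
    by (metis inner_matrix_vector_transpose transpose_transpose)
  finally have "w \<bullet> ((transpose L ** A ** L) *v w) = (L *v w) \<bullet> (A *v (L *v w))" .
  then show ?thesis using assms by simp
qed

lemma frob_sq_eq_trace: "frob_sq M = trace (M ** transpose (M :: real^'m^'n))"
  by (simp add: frob_sq_def trace_def matrix_matrix_mult_def transpose_def power2_eq_square)

lemma frob_sq_mult: "frob_sq (W ** N) = trace (W ** (N ** transpose N) ** transpose W)"
  by (simp add: frob_sq_eq_trace matrix_transpose_mul matrix_mul_assoc)

lemma congruence_entry:
  "(transpose V ** A ** V) $ i $ j = column i V \<bullet> (A *v column j (V :: real^'r^'d))"
  unfolding matrix_mul_assoc[symmetric]
  by (simp add: matrix_matrix_mult_def transpose_def column_def inner_vec_def matrix_vector_mult_def)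

lemma trace_congruence_eq_sum_columns:
  "trace (transpose V ** A ** V) = (\<Sum>j\<in>UNIV. column j V \<bullet> (A *v column j (V :: real^'r^'d)))"
  by (simp add: trace_def congruence_entry)

lemma transpose_centering: "transpose centering = centering"
  by (simp add: centering_def transpose_def vec_eq_iff mat_def)

lemma centering_mult_vec:
  fixes y :: "real^'n"
  shows "centering *v y = y - ((\<Sum>i\<in>UNIV. y$i) / real CARD('n)) *\<^sub>R ((\<chi> i. 1) :: real^'n)"
  unfolding centering_def matrix_vector_mult_diff_rdistrib matrix_vector_mul_lid
  by (simp add: vec_eq_iff matrix_vector_mult_def sum_divide_distrib)

text \<open>The centering matrix is the orthogonal projection onto the complement of the constants.\<close>
lemma centering_psd:
  fixes y :: "real^'n"
  shows "0 \<le> y \<bullet> (centering *v y)"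
proof -
  define c where "c = (\<Sum>i\<in>UNIV. y$i) / real CARD('n)"
  define z where "z = centering *v y"
  have y_eq: "y = z + c *\<^sub>R (\<chi> i. 1)"
    unfolding z_def c_def centering_mult_vec by simp
  have "(\<chi> i. 1) \<bullet> z = 0"
    unfolding z_def by (simp add: centering_mult_vec inner_diff_right inner_vec_def sum_subtractf)
  then have "y \<bullet> z = z \<bullet> z"
    by (subst y_eq) (simp add: inner_add_left)
  then show ?thesis unfolding z_def by simp
qed

lemma transpose_factored: "L ** transpose L = K \<Longrightarrow> transpose K = (K :: real^'n^'n)"
  by (metis matrix_transpose_mul transpose_transpose)

lemma transpose_centered_congruence:
  assumes "transpose K = K"
  shows "transpose (transpose L ** centering ** K ** centering ** L)
    = transpose L ** centering ** K ** centering ** (L :: real^'d^'n)"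
  using assms by (simp add: matrix_transpose_mul transpose_centering matrix_mul_assoc)

lemma centered_covariance_coercive:
  fixes L :: "real^'d^'n"
  shows "gam * (w \<bullet> w)
    \<le> w \<bullet> (((1 / real CARD('n)) *\<^sub>R (transpose L ** centering ** L) + gam *\<^sub>R mat 1) *v w)"
  using congruence_psd[OF centering_psd, of w L]
  by (simp add: matrix_vector_mult_add_rdistrib scaleR_matrix_vector_assoc[symmetric] inner_add_right)

definition moore_penrose_inverse :: "real^'n^'m \<Rightarrow> real^'m^'n \<Rightarrow> bool" where
  "moore_penrose_inverse A X \<longleftrightarrow> A ** X ** A = A \<and> X ** A ** X = X \<and>
     transpose (A ** X) = A ** X \<and> transpose (X ** A) = X ** A"

lemma moore_penrose_inverse_unique:
  assumes X: "moore_penrose_inverse A X" and Y: "moore_penrose_inverse A Y"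
  shows "X = Y"
proof -
  have "A ** X = transpose (A ** Y ** A ** X)"
    using X Y by (simp add: moore_penrose_inverse_def)
  also have "\<dots> = transpose (A ** X) ** transpose (A ** Y)"
    by (simp add: matrix_transpose_mul matrix_mul_assoc)
  also have "\<dots> = A ** Y"
    using X Y by (simp add: moore_penrose_inverse_def matrix_mul_assoc)
  finally have AX: "A ** X = A ** Y" .
  have "X ** A = transpose (X ** (A ** Y ** A))"
    using X Y by (simp add: moore_penrose_inverse_def)
  also have "\<dots> = transpose (Y ** A) ** transpose (X ** A)"
    by (simp add: matrix_transpose_mul matrix_mul_assoc)
  also have "\<dots> = Y ** A"
    using X Y by (simp add: moore_penrose_inverse_def matrix_mul_assoc[symmetric])
  finally have XA: "X ** A = Y ** A" .
  have "X = X ** A ** X" using X by (simp add: moore_penrose_inverse_def)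
  also have "\<dots> = Y ** A ** Y" using AX XA by (metis matrix_mul_assoc)
  also have "\<dots> = Y" using Y by (simp add: moore_penrose_inverse_def)
  finally show ?thesis .
qed

lemma pinv_eqI: "moore_penrose_inverse A X \<Longrightarrow> pinv A = X"
  unfolding pinv_def moore_penrose_inverse_def[symmetric]
  using moore_penrose_inverse_unique by blast

text \<open>The Moore-Penrose inverse of L is the left inverse (L^T L)^-1 L^T.\<close>
lemma pinv_full_column_rank:
  fixes L :: "real^'d^'n"
  assumes "rank L = CARD('d)"
  shows "pinv L ** L = mat 1"
proof -
  let ?G = "transpose L ** L"
  have "x = 0" if "?G *v x = 0" for x
  proof -
    have "(L *v x) \<bullet> (L *v x) = 0"
      using that by (simp add: inner_matrix_vector_transpose matrix_vector_mul_assoc[symmetric])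
    then show "x = 0"
      using assms full_rank_injective by (metis inner_eq_zero_iff injD matrix_vector_mult_0_right)
  qed
  then obtain Gi where GiG: "Gi ** ?G = mat 1"
    using matrix_left_invertible_ker by blast
  then have GGi: "?G ** Gi = mat 1"
    using matrix_left_right_inverse by blast
  have "transpose Gi ** ?G = mat 1"
    using arg_cong[OF GGi, of transpose] by (simp add: matrix_transpose_mul)
  then have Gi_sym: "transpose Gi = Gi"
    by (metis GGi matrix_mul_assoc matrix_mul_lid matrix_mul_rid)
  define X where "X = Gi ** transpose L"
  have XL: "X ** L = mat 1"
    unfolding X_def using GiG by (simp add: matrix_mul_assoc)
  have "transpose (L ** X) = L ** X"
    unfolding X_def by (simp add: matrix_transpose_mul Gi_sym matrix_mul_assoc)
  with XL have "moore_penrose_inverse L X"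
    by (simp add: moore_penrose_inverse_def matrix_mul_assoc[symmetric])
  with XL show ?thesis by (simp add: pinv_eqI)
qed

lemma fair_feasible_iff:
  fixes LX :: "real^'d^'n" and Th :: "real^'n^'r"
  assumes "LX ** transpose LX = K"
  shows "fair_feasible gam K Th \<longleftrightarrow>
    (Th ** LX) ** ((1 / real CARD('n)) *\<^sub>R (transpose LX ** centering ** LX) + gam *\<^sub>R mat 1)
      ** transpose (Th ** LX) = mat 1"
proof -
  have "Th ** K = (Th ** LX) ** transpose LX"
    unfolding assms[symmetric] by (simp add: matrix_mul_assoc)
  then show ?thesis
    unfolding fair_feasible_def emp_cov_def
    by (simp add: matrix_transpose_mul matrix_mul_assoc matrix_add_ldistrib matrix_add_rdistrib
        matrix_scalar_ac scalar_matrix_assoc[symmetric])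
qed

lemma fair_objective_eq_trace:
  fixes LX :: "real^'d^'n" and LXc :: "real^'d^'m" and Th :: "real^'n^'r"
  assumes "LX ** transpose LX = K" and "LX ** transpose LXc = Kc"
    and "LY ** transpose LY = KY" and "LS ** transpose LS = KS"
  shows "fair_objective lam K Kc LY LS Th =
    trace ((Th ** LX) ** ((1 - lam) *\<^sub>R (transpose LX ** centering ** KY ** centering ** LX)
      - lam *\<^sub>R (transpose LXc ** centering ** KS ** centering ** LXc)) ** transpose (Th ** LX))
    / (real CARD('n))^2"
proof -
  let ?W = "Th ** LX"
  have Y: "frob_sq (Th ** K ** centering ** LY)
      = trace (?W ** (transpose LX ** centering ** KY ** centering ** LX) ** transpose ?W)"
    using frob_sq_mult[of ?W "transpose LX ** centering ** LY"] unfolding assms[symmetric]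
    by (simp add: matrix_transpose_mul transpose_centering matrix_mul_assoc)
  have S: "frob_sq (Th ** Kc ** centering ** LS)
      = trace (?W ** (transpose LXc ** centering ** KS ** centering ** LXc) ** transpose ?W)"
    using frob_sq_mult[of ?W "transpose LXc ** centering ** LS"] unfolding assms[symmetric]
    by (simp add: matrix_transpose_mul transpose_centering matrix_mul_assoc)
  have lin: "trace (?W ** (a *\<^sub>R P - b *\<^sub>R Q) ** transpose ?W)
      = a * trace (?W ** P ** transpose ?W) - b * trace (?W ** Q ** transpose ?W)" for a b P Q
    by (simp add: matrix_diff_ldistrib matrix_diff_rdistrib matrix_scalar_ac
        scalar_matrix_assoc[symmetric] trace_sub trace_scaleR)
  have coeff: "(1 - lam) / N * a - lam / N * b = ((1 - lam) * a - lam * b) / N" for N a b :: real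
    by (metis diff_divide_distrib times_divide_eq_left)
  show ?thesis
    unfolding fair_objective_def Y S lin coeff ..
qed

lemma linear_coeff_zero_if_quadratic_nonpos:
  fixes g c :: real
  assumes "\<And>t. 2 * t * g + t\<^sup>2 * c \<le> 0"
  shows "g = 0"
proof -
  define e where "e = \<bar>c\<bar> + 1"
  have e: "e > 0" "2 * e + c > 0" unfolding e_def by auto
  have "(2 * (g / e) * g + (g / e)\<^sup>2 * c) * e\<^sup>2 = g\<^sup>2 * (2 * e + c)"
    using e by (simp add: field_simps power2_eq_square)
  moreover have "(2 * (g / e) * g + (g / e)\<^sup>2 * c) * e\<^sup>2 \<le> 0"
    using assms[of "g / e"] by (simp add: mult_nonpos_nonneg)
  ultimately have "g\<^sup>2 * (2 * e + c) \<le> 0" by simp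
  with e show ?thesis
    by (simp add: mult_le_0_iff)
qed

locale top_gen_eigenbasis =
  fixes A B :: "real^'d::finite^'d" and U :: "real^'r::finite^'d" and tau :: "'r \<Rightarrow> real"
    and gam :: real
  assumes A_sym: "transpose A = A" and B_sym: "transpose B = B"
    and gam_pos: "gam > 0" and B_coercive: "\<And>w. gam * (w \<bullet> w) \<le> w \<bullet> (B *v w)"
    and eigvecs: "\<And>i. A *v column i U = tau i *\<^sub>R (B *v column i U)"
    and B_orthonormal: "transpose U ** B ** U = mat 1"
    and top_eigenvalues: "\<And>w mu i. w \<noteq> 0 \<Longrightarrow> A *v w = mu *\<^sub>R (B *v w) \<Longrightarrow>
      transpose U *v (B *v w) = 0 \<Longrightarrow> mu \<le> tau i"
begin

lemma B_pos: "x \<noteq> 0 \<Longrightarrow> 0 < x \<bullet> (B *v x)"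
  using B_coercive[of x] gam_pos by (smt (verit) inner_gt_zero_iff mult_pos_pos)

lemma B_nonneg: "0 \<le> x \<bullet> (B *v x)"
  using B_pos[of x] by (cases "x = 0") auto

lemma B_surj: "\<exists>h. B *v h = z"
proof -
  have "\<forall>x. B *v x = 0 \<longrightarrow> x = 0" using B_pos by fastforce
  then obtain Bi where "Bi ** B = mat 1" using matrix_left_invertible_ker by blast
  then have "B *v (Bi *v z) = z"
    by (simp add: matrix_vector_mul_assoc matrix_left_right_inverse)
  then show ?thesis ..
qed

lemma B_orthonormal_columns: "column i U \<bullet> (B *v column k U) = (if i = k then 1 else 0)"
  using congruence_entry[of U B i k] B_orthonormal by (simp add: mat_def)

lemma A_inner_column: "column i U \<bullet> (A *v w) = tau i * (column i U \<bullet> (B *v w))"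
  using inner_symmetric_matrix[OF A_sym] inner_symmetric_matrix[OF B_sym] eigvecs
  by (metis inner_scaleR_right)

definition B_perp :: "(real^'d) set" where
  "B_perp = {w. \<forall>i. column i U \<bullet> (B *v w) = 0}"

lemma subspace_B_perp: "subspace B_perp"
  by (simp add: B_perp_def subspace_def matrix_vector_right_distrib matrix_vector_mult_scaleR
      inner_add_right)

lemma compact_B_perp_sphere: "compact {w \<in> B_perp. w \<bullet> (B *v w) = 1}"
proof -
  have "closed {w \<in> B_perp. w \<bullet> (B *v w) = 1}"
    unfolding B_perp_def mem_Collect_eq
    by (intro closed_Collect_conj closed_Collect_all closed_Collect_eq continuous_intros)
  moreover have "norm w \<le> sqrt (1 / gam)" if "w \<bullet> (B *v w) = 1" for w
  proof -
    have "w \<bullet> w \<le> 1 / gam"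
      using B_coercive[of w] gam_pos that by (simp add: field_simps)
    then show ?thesis by (simp add: norm_eq_sqrt_inner)
  qed
  then have "bounded {w \<in> B_perp. w \<bullet> (B *v w) = 1}"
    by (auto simp: bounded_iff)
  ultimately show ?thesis by (simp add: compact_eq_bounded_closed)
qed

lemma rayleigh_max_exists:
  assumes "w \<in> B_perp" and "w \<noteq> 0"
  obtains w0 where "w0 \<in> B_perp" and "w0 \<bullet> (B *v w0) = 1"
    and "\<And>x. x \<in> B_perp \<Longrightarrow> x \<bullet> (A *v x) \<le> (w0 \<bullet> (A *v w0)) * (x \<bullet> (B *v x))"
proof -
  let ?S = "{w \<in> B_perp. w \<bullet> (B *v w) = 1}"
  let ?normalize = "\<lambda>x. (1 / sqrt (x \<bullet> (B *v x))) *\<^sub>R x"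
  have scaled: "?normalize x \<bullet> (M *v ?normalize x) = (x \<bullet> (M *v x)) / (x \<bullet> (B *v x))"
    if "x \<noteq> 0" for x M
    unfolding inner_matrix_vector_scaleR using B_pos[OF that] by (simp add: power_divide)
  have normalize: "?normalize x \<in> ?S" if "x \<in> B_perp" "x \<noteq> 0" for x
    using that scaled[of x B] B_pos[of x] subspace_scale[OF subspace_B_perp] by simp
  have "?S \<noteq> {}" using normalize[OF assms] by blast
  moreover have "continuous_on ?S (\<lambda>y. y \<bullet> (A *v y))" by (intro continuous_intros)
  ultimately obtain w0 where w0: "w0 \<in> ?S"
    and max: "\<And>y. y \<in> ?S \<Longrightarrow> y \<bullet> (A *v y) \<le> w0 \<bullet> (A *v w0)"
    using continuous_attains_sup[OF compact_B_perp_sphere] by blast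
  have "x \<bullet> (A *v x) \<le> (w0 \<bullet> (A *v w0)) * (x \<bullet> (B *v x))" if "x \<in> B_perp" for x
  proof (cases "x = 0")
    case False
    have "?normalize x \<bullet> (A *v ?normalize x) \<le> w0 \<bullet> (A *v w0)"
      using that False by (intro max normalize)
    then have "(x \<bullet> (A *v x)) / (x \<bullet> (B *v x)) \<le> w0 \<bullet> (A *v w0)"
      by (simp only: scaled[OF False])
    then show ?thesis using B_pos[OF False] by (simp add: field_simps)
  qed simp
  with w0 that show ?thesis by blast
qed

lemma rayleigh_max_stationary:
  assumes w0: "w0 \<in> B_perp" and h: "h \<in> B_perp"
    and bound: "\<And>x. x \<in> B_perp \<Longrightarrow> x \<bullet> (A *v x) \<le> m * (x \<bullet> (B *v x))"
    and attained: "w0 \<bullet> (A *v w0) = m * (w0 \<bullet> (B *v w0))"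
  shows "h \<bullet> (A *v w0 - m *\<^sub>R (B *v w0)) = 0"
proof -
  define C where "C = A - m *\<^sub>R B"
  have C_sym: "transpose C = C"
    unfolding C_def by (simp add: transpose_diff transpose_scalar A_sym B_sym)
  have C_mult: "C *v x = A *v x - m *\<^sub>R (B *v x)" for x
    unfolding C_def by (simp add: matrix_vector_mult_diff_rdistrib scaleR_matrix_vector_assoc)
  have "2 * t * (h \<bullet> (C *v w0)) + t\<^sup>2 * (h \<bullet> (C *v h)) \<le> 0" for t
  proof -
    have "w0 + t *\<^sub>R h \<in> B_perp"
      using subspace_B_perp w0 h by (simp add: subspace_add subspace_scale)
    then have "(w0 + t *\<^sub>R h) \<bullet> (C *v (w0 + t *\<^sub>R h)) \<le> 0"
      using bound by (simp add: C_mult inner_diff_right)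
    moreover have "w0 \<bullet> (C *v w0) = 0"
      using attained by (simp add: C_mult inner_diff_right)
    ultimately show ?thesis
      unfolding inner_symmetric_matrix_add[OF C_sym] inner_matrix_vector_scaleR
      using inner_symmetric_matrix[OF C_sym, of w0 h]
      by (simp add: matrix_vector_mult_scaleR mult.assoc)
  qed
  then have "h \<bullet> (C *v w0) = 0"
    by (rule linear_coeff_zero_if_quadratic_nonpos)
  then show ?thesis by (simp add: C_mult)
qed

text \<open>The residual z is orthogonal to B_perp, while B^-1 z lies in B_perp because the columns of U
  are eigenvectors; hence z = 0.\<close>
lemma rayleigh_max_eigvec:
  assumes w0: "w0 \<in> B_perp"
    and bound: "\<And>x. x \<in> B_perp \<Longrightarrow> x \<bullet> (A *v x) \<le> m * (x \<bullet> (B *v x))"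
    and attained: "w0 \<bullet> (A *v w0) = m * (w0 \<bullet> (B *v w0))"
  shows "A *v w0 = m *\<^sub>R (B *v w0)"
proof -
  define z where "z = A *v w0 - m *\<^sub>R (B *v w0)"
  obtain h where Bh: "B *v h = z" using B_surj by blast
  have "column i U \<bullet> z = 0" for i
    using w0 by (simp add: z_def inner_diff_right A_inner_column B_perp_def)
  then have "h \<in> B_perp" using Bh by (simp add: B_perp_def)
  then have "h \<bullet> (B *v h) = 0"
    using rayleigh_max_stationary[OF w0 _ bound attained] Bh by (simp add: z_def)
  then have "h = 0" using B_pos by force
  then show ?thesis using Bh by (simp add: z_def)
qed

lemma rayleigh_B_perp:
  assumes "w \<in> B_perp"
  shows "w \<bullet> (A *v w) \<le> tau i * (w \<bullet> (B *v w))"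
proof (cases "w = 0")
  case False
  obtain w0 where w0: "w0 \<in> B_perp" and w0_unit: "w0 \<bullet> (B *v w0) = 1"
    and bound: "\<And>x. x \<in> B_perp \<Longrightarrow> x \<bullet> (A *v x) \<le> (w0 \<bullet> (A *v w0)) * (x \<bullet> (B *v x))"
    using rayleigh_max_exists[OF assms False] by blast
  have "w0 \<bullet> (A *v w0) \<le> tau i"
  proof (rule top_eigenvalues)
    show "w0 \<noteq> 0" using w0_unit by auto
    show "A *v w0 = (w0 \<bullet> (A *v w0)) *\<^sub>R (B *v w0)"
      using rayleigh_max_eigvec[OF w0 bound] w0_unit by simp
    show "transpose U *v (B *v w0) = 0"
      using w0 by (simp add: B_perp_def vec_eq_iff matrix_vector_mult_def transpose_def
          column_def inner_vec_def mult.commute)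
  qed
  then show ?thesis
    using bound[OF assms] B_nonneg[of w] by (meson mult_right_mono order_trans)
qed simp

lemma B_bessel:
  assumes V: "transpose V ** B ** V = mat 1"
  shows "(\<Sum>j\<in>UNIV. (x \<bullet> (B *v column j V))\<^sup>2) \<le> x \<bullet> (B *v x)"
proof -
  define a where "a j = x \<bullet> (B *v column j V)" for j
  define s where "s = (\<Sum>j\<in>UNIV. a j *\<^sub>R column j V)"
  have V_orthonormal: "column j V \<bullet> (B *v column l V) = (if j = l then 1 else 0)" for j l
    using congruence_entry[of V B j l] V by (simp add: mat_def)
  have s_inner: "s \<bullet> y = (\<Sum>j\<in>UNIV. a j * (column j V \<bullet> y))" for y
    unfolding s_def by (simp add: inner_sum_left)
  have s_B_column: "column l V \<bullet> (B *v s) = a l" for l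
    unfolding inner_symmetric_matrix[OF B_sym, of "column l V"] s_inner
    by (simp add: V_orthonormal if_distrib cong: if_cong)
  have s_B_x: "s \<bullet> (B *v x) = (\<Sum>j\<in>UNIV. (a j)\<^sup>2)"
    unfolding s_inner using inner_symmetric_matrix[OF B_sym, of x]
    by (simp add: a_def power2_eq_square)
  have s_B_s: "s \<bullet> (B *v s) = (\<Sum>j\<in>UNIV. (a j)\<^sup>2)"
    unfolding s_inner by (simp add: s_B_column power2_eq_square)
  have "0 \<le> (x - s) \<bullet> (B *v (x - s))" by (rule B_nonneg)
  also have "\<dots> = x \<bullet> (B *v x) - 2 * (s \<bullet> (B *v x)) + s \<bullet> (B *v s)"
    using inner_symmetric_matrix[OF B_sym, of x s]
    by (simp add: matrix_vector_mult_diff_distrib inner_diff_left inner_diff_right)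
  finally show ?thesis unfolding s_B_x s_B_s a_def by simp
qed

text \<open>Write v = p + w with p the B-projection onto the span of the columns of U and w in B_perp;
  the cross terms vanish in both quadratic forms.\<close>
lemma quadratic_bound_by_projection:
  "v \<bullet> (A *v v) \<le> tau l * (v \<bullet> (B *v v))
     + (\<Sum>i\<in>UNIV. (tau i - tau l) * (column i U \<bullet> (B *v v))\<^sup>2)"
proof -
  define a where "a i = column i U \<bullet> (B *v v)" for i
  define p where "p = (\<Sum>i\<in>UNIV. a i *\<^sub>R column i U)"
  define w where "w = v - p"
  have p_inner: "p \<bullet> y = (\<Sum>i\<in>UNIV. a i * (column i U \<bullet> y))" for y
    unfolding p_def by (simp add: inner_sum_left)
  have U_B_p: "column k U \<bullet> (B *v p) = a k" for k
    unfolding inner_symmetric_matrix[OF B_sym, of "column k U"] p_inner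
    by (simp add: B_orthonormal_columns if_distrib cong: if_cong)
  have w: "w \<in> B_perp"
    unfolding w_def B_perp_def by (simp add: matrix_vector_mult_diff_distrib inner_diff_right U_B_p a_def)
  then have "p \<bullet> (A *v w) = 0" and "p \<bullet> (B *v w) = 0"
    unfolding p_inner by (simp_all add: A_inner_column B_perp_def)
  moreover have "p \<bullet> (A *v p) = (\<Sum>i\<in>UNIV. tau i * (a i)\<^sup>2)"
    and "p \<bullet> (B *v p) = (\<Sum>i\<in>UNIV. (a i)\<^sup>2)"
    unfolding p_inner by (simp_all add: A_inner_column U_B_p power2_eq_square mult_ac)
  moreover have "v = p + w" by (simp add: w_def)
  ultimately have "v \<bullet> (A *v v) = (\<Sum>i\<in>UNIV. tau i * (a i)\<^sup>2) + w \<bullet> (A *v w)"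
    and "v \<bullet> (B *v v) = (\<Sum>i\<in>UNIV. (a i)\<^sup>2) + w \<bullet> (B *v w)"
    by (simp_all add: inner_symmetric_matrix_add[OF A_sym] inner_symmetric_matrix_add[OF B_sym])
  moreover have "w \<bullet> (A *v w) \<le> tau l * (w \<bullet> (B *v w))"
    using w by (rule rayleigh_B_perp)
  moreover have "(\<Sum>i\<in>UNIV. (tau i - tau l) * (a i)\<^sup>2)
      = (\<Sum>i\<in>UNIV. tau i * (a i)\<^sup>2) - tau l * (\<Sum>i\<in>UNIV. (a i)\<^sup>2)"
    by (simp add: left_diff_distrib sum_subtractf sum_distrib_left)
  ultimately show ?thesis
    unfolding a_def by (simp add: algebra_simps)
qed

lemma ky_fan_trace_le:
  fixes V :: "real^'r^'d"
  assumes V: "transpose V ** B ** V = mat 1"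
  shows "trace (transpose V ** A ** V) \<le> trace (transpose U ** A ** U)"
proof -
  have "Min (range tau) \<in> range tau" by (rule Min_in) auto
  then obtain imin where "tau imin = Min (range tau)" by (metis rangeE)
  then have imin: "tau imin \<le> tau i" for i by simp
  define a where "a i j = column i U \<bullet> (B *v column j V)" for i j
  have bessel: "(\<Sum>j\<in>UNIV. (a i j)\<^sup>2) \<le> 1" for i
    using B_bessel[OF V, of "column i U"] by (simp add: a_def B_orthonormal_columns)
  have V_unit: "column j V \<bullet> (B *v column j V) = 1" for j
    using congruence_entry[of V B j j] V by (simp add: mat_def)
  have "trace (transpose V ** A ** V) = (\<Sum>j\<in>UNIV. column j V \<bullet> (A *v column j V))"
    by (rule trace_congruence_eq_sum_columns)
  also have "\<dots> \<le> (\<Sum>j\<in>UNIV. tau imin + (\<Sum>i\<in>UNIV. (tau i - tau imin) * (a i j)\<^sup>2))"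
  proof (intro sum_mono)
    fix j
    show "column j V \<bullet> (A *v column j V) \<le> tau imin + (\<Sum>i\<in>UNIV. (tau i - tau imin) * (a i j)\<^sup>2)"
      using quadratic_bound_by_projection[where v = "column j V" and l = imin] V_unit[of j]
      by (simp add: a_def)
  qed
  also have "\<dots> = (\<Sum>i\<in>UNIV. tau imin + (tau i - tau imin) * (\<Sum>j\<in>UNIV. (a i j)\<^sup>2))"
  proof -
    have "(\<Sum>j\<in>UNIV. \<Sum>i\<in>UNIV. (tau i - tau imin) * (a i j)\<^sup>2)
        = (\<Sum>i\<in>UNIV. (tau i - tau imin) * (\<Sum>j\<in>UNIV. (a i j)\<^sup>2))"
      by (subst sum.swap) (simp add: sum_distrib_left)
    then show ?thesis by (simp add: sum.distrib)
  qed
  also have "\<dots> \<le> (\<Sum>i\<in>UNIV. tau i)"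
  proof (intro sum_mono)
    fix i
    have "(tau i - tau imin) * (\<Sum>j\<in>UNIV. (a i j)\<^sup>2) \<le> tau i - tau imin"
      using bessel[of i] imin[of i] by (simp add: mult_left_le)
    then show "tau imin + (tau i - tau imin) * (\<Sum>j\<in>UNIV. (a i j)\<^sup>2) \<le> tau i" by simp
  qed
  also have "\<dots> = trace (transpose U ** A ** U)"
    by (simp add: trace_congruence_eq_sum_columns A_inner_column B_orthonormal_columns)
  finally show ?thesis .
qed

end

lemma top_gen_eigvecs_maximize_trace:
  fixes V U :: "real^'r::finite^'d::finite"
  assumes "transpose A = A" and "transpose B = B"
    and "gam > 0" and "\<And>w. gam * (w \<bullet> w) \<le> w \<bullet> (B *v w)"
    and "top_gen_eigvecs A B U" and "transpose V ** B ** V = mat 1"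
  shows "trace (transpose V ** A ** V) \<le> trace (transpose U ** A ** U)"
proof -
  obtain tau where "top_gen_eigenbasis A B U tau gam"
    using assms(1-5) unfolding top_gen_eigvecs_def top_gen_eigenbasis_def by blast
  then show ?thesis using assms(6) by (rule top_gen_eigenbasis.ky_fan_trace_le)
qed

theorem theorem1:
  fixes k :: "'x \<Rightarrow> 'x \<Rightarrow> real"
    and xs :: "'n::finite \<Rightarrow> 'x" and xcs :: "'m::finite \<Rightarrow> 'x"
    and kY :: "'y \<Rightarrow> 'y \<Rightarrow> real" and ys :: "'n \<Rightarrow> 'y"
    and kS :: "'s \<Rightarrow> 's \<Rightarrow> real" and scs :: "'m \<Rightarrow> 's"
    and LX :: "real^'d::finite^'n" and LXc :: "real^'d^'m"
    and LY :: "real^'p::finite^'n" and LS :: "real^'q::finite^'m"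
    and U :: "real^'r::finite^'d"
    and lam gam :: real
  assumes "0 \<le> lam" and "lam < 1" and "gam > 0"
    and "LX ** transpose LX = gram k xs xs" and "rank LX = CARD('d)"
    and "LX ** transpose LXc = gram k xs xcs"
    and "LY ** transpose LY = gram kY ys ys" and "rank LY = CARD('p)"
    and "LS ** transpose LS = gram kS scs scs" and "rank LS = CARD('q)"
    and "top_gen_eigvecs
           ((1 - lam) *\<^sub>R (transpose LX ** centering ** gram kY ys ys ** centering ** LX)
              - lam *\<^sub>R (transpose LXc ** centering ** gram kS scs scs ** centering ** LXc))
           ((1 / real CARD('n)) *\<^sub>R (transpose LX ** centering ** LX) + gam *\<^sub>R mat 1)
           U"
  shows "fair_optimizer lam gam (gram k xs xs) (gram k xs xcs) LY LS (transpose U ** pinv LX)"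
proof -
  let ?A = "(1 - lam) *\<^sub>R (transpose LX ** centering ** gram kY ys ys ** centering ** LX)
              - lam *\<^sub>R (transpose LXc ** centering ** gram kS scs scs ** centering ** LXc)"
  let ?B = "(1 / real CARD('n)) *\<^sub>R (transpose LX ** centering ** LX) + gam *\<^sub>R mat 1"
  have A_sym: "transpose ?A = ?A"
    using transpose_centered_congruence[OF transpose_factored[OF assms(7)], of LX]
      transpose_centered_congruence[OF transpose_factored[OF assms(9)], of LXc]
    by (simp add: transpose_diff transpose_scalar)
  have B_sym: "transpose ?B = ?B"
    by (simp add: transpose_add transpose_scalar matrix_transpose_mul transpose_centering
        matrix_mul_assoc)
  note trace_le = top_gen_eigvecs_maximize_trace
    [OF A_sym B_sym assms(3) centered_covariance_coercive assms(11)]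
  have U_feasible: "transpose U ** ?B ** U = mat 1"
    using assms(11) unfolding top_gen_eigvecs_def by blast
  have W_opt: "transpose U ** pinv LX ** LX = transpose U"
    using pinv_full_column_rank[OF assms(5)] by (simp add: matrix_mul_assoc[symmetric])
  note feasible = fair_feasible_iff[OF assms(4)]
  note objective = fair_objective_eq_trace[OF assms(4,6,7,9)]
  show ?thesis
    unfolding fair_optimizer_def
  proof (intro conjI allI impI)
    show "fair_feasible gam (gram k xs xs) (transpose U ** pinv LX)"
      using U_feasible by (simp add: feasible W_opt)
    fix Th :: "real^'n^'r"
    assume "fair_feasible gam (gram k xs xs) Th"
    with trace_le[of "transpose (Th ** LX)"]
    have "trace ((Th ** LX) ** ?A ** transpose (Th ** LX)) \<le> trace (transpose U ** ?A ** U)"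
      by (simp add: feasible)
    then show "fair_objective lam (gram k xs xs) (gram k xs xcs) LY LS Th
        \<le> fair_objective lam (gram k xs xs) (gram k xs xcs) LY LS (transpose U ** pinv LX)"
      by (simp add: objective W_opt divide_right_mono)
  qed
qed

end
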